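(* Let $0<T<\infty$, $\Delta=(0,T]$, and let $F$ be a distribution on $[0,\infty)$ belonging to $\mathcal L_\Delta$. Assume there exists $x_0$ such that $g(x)=-\ln F(x+\Delta)$ is concave on $[x_0,\infty)$, and there exists a function $h(x)\uparrow\infty$ such that $F(x+t+\Delta)\sim F(x+\Delta)$ as $x\to\infty$ uniformly in $|t|\le h(x)$ and $x\,F(h(x)+\Delta)\to0$ as $x\to\infty$. Then $F\in\mathcal S_\Delta$.
   Context: $x+\Delta=(x,x+T]$. $F\in\mathcal L_\Delta$ means $F(x+\Delta)>0$ for all large $x$ and $F(x+t+\Delta)/F(x+\Delta)\to1$ as $x\to\infty$ uniformly in $t\in[0,1]$. A distribution $F$ on $[0,\infty)$ with unbounded support is in $\mathcal S_\Delta$ if $F\in\mathcal L_\Delta$ and $(F*F)(x+\Delta)\sim2F(x+\Delta)$ as $x\to\infty$. $a\sim b$ means $a/b\to1$. *)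

theory Defs
  imports "HOL-Probability.Probability" "HOL-Library.Landau_Symbols"
begin

definition distr_nonneg :: "real measure \<Rightarrow> bool" where
  "distr_nonneg M \<longleftrightarrow> prob_space M \<and> sets M = sets borel \<and> measure M {..<0} = 0"

text \<open>F(x + Delta) with Delta = (0,T], i.e. F((x, x+T]).\<close>
definition int_prob :: "real measure \<Rightarrow> real \<Rightarrow> real \<Rightarrow> real" where
  "int_prob M T x = measure M {x<..x+T}"

definition local_long_tailed :: "real measure \<Rightarrow> real \<Rightarrow> bool" where
  "local_long_tailed M T \<longleftrightarrow>
     eventually (\<lambda>x. int_prob M T x > 0) at_top \<and>
     (\<forall>\<epsilon>>0. eventually (\<lambda>x. \<forall>t\<in>{0..1}.
         \<bar>int_prob M T (x + t) / int_prob M T x - 1\<bar> < \<epsilon>) at_top)"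

definition local_subexp :: "real measure \<Rightarrow> real \<Rightarrow> bool" where
  "local_subexp M T \<longleftrightarrow>
     (\<forall>x. measure M {x<..} > 0) \<and> local_long_tailed M T \<and>
     ((\<lambda>x. int_prob (M \<star> M) T x) \<sim>[at_top] (\<lambda>x. 2 * int_prob M T x))"

end

theory Submission
  imports Defs "HOL-Real_Asymp.Real_Asymp"
begin

text \<open>
  Write \<open>f x = F(x + \<Delta>)\<close>. Log-concavity makes \<open>f\<close> eventually nonincreasing, hence
  \<open>x f x \<rightarrow> 0\<close>, and it gives \<open>f u f v \<le> f p f q\<close> whenever \<open>p \<le> u \<le> q\<close> and \<open>u + v = p + q\<close>.
  For independent \<open>X, Y\<close> with law \<open>F\<close>, split the event \<open>X + Y \<in> x + \<Delta>\<close> at the level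
  \<open>H = min (h x) (x / 4)\<close>. By the uniform local long-tailedness over shifts \<open>\<bar>t\<bar> \<le> h x\<close>,
  each of the parts \<open>X \<le> H\<close> and \<open>Y \<le> H\<close> has probability \<open>(1 + o(1)) f x\<close>. The part where
  both exceed \<open>H\<close> is covered by \<open>O(x / T)\<close> rectangles, each of probability at most
  \<open>2 (1 + o(1)) f(H - 2T) f x\<close> by the product inequality, and \<open>x f(H - 2T) \<rightarrow> 0\<close> follows from
  \<open>x f(h x) \<rightarrow> 0\<close> and \<open>x f x \<rightarrow> 0\<close>.
\<close>

lemma concave_on_subset: "concave_on T f \<Longrightarrow> S \<subseteq> T \<Longrightarrow> convex S \<Longrightarrow> concave_on S f"
  unfolding concave_on_def by (rule convex_on_subset)

lemma concave_on_mono_on_if_filterlim_at_top: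
  fixes g :: "real \<Rightarrow> real"
  assumes concave: "concave_on {x\<^sub>0..} g" and lim: "filterlim g at_top at_top"
  shows "mono_on {x\<^sub>0..} g"
proof (rule mono_onI, rule ccontr)
  fix a b assume ab: "a \<in> {x\<^sub>0..}" "b \<in> {x\<^sub>0..}" "a \<le> b" and "\<not> g a \<le> g b"
  then have gba: "g b < g a" by simp
  obtain c where c: "b \<le> c" "g b < g c"
    using eventually_conj[OF eventually_ge_at_top[of b] lim[unfolded filterlim_at_top_dense, rule_format, of "g b"]]
    by (auto simp: eventually_at_top_linorder)
  have "min (g a) (g c) \<le> g b"
    using concave_on_subset[OF concave, of "{a..c}"] ab c
    by (intro concave_on_ge_min) auto
  with gba c show False by linarith
qed

lemma concave_on_add_le_add_inner:
  fixes g :: "real \<Rightarrow> real"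
  assumes concave: "concave_on {x\<^sub>0..} g"
    and "x\<^sub>0 \<le> p" "p \<le> u" "u \<le> q" "u + v = p + q"
  shows "g p + g q \<le> g u + g v"
proof (cases "p < q")
  case True
  have concave_pq: "concave_on {p..q} g"
    using assms by (intro concave_on_subset[OF concave]) auto
  have "g u \<ge> (g q - g p) / (q - p) * (u - p) + g p"
    "g v \<ge> (g q - g p) / (q - p) * (v - p) + g p"
    using concave_onD_Icc'[OF concave_pq, of u] concave_onD_Icc'[OF concave_pq, of v] assms
    by auto
  moreover have "(u - p) + (v - p) = q - p"
    using assms by linarith
  then have "(g q - g p) / (q - p) * (u - p) + (g q - g p) / (q - p) * (v - p)
      = (g q - g p) / (q - p) * (q - p)"
    by (simp only: distrib_left[symmetric])
  ultimately show ?thesis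
    using True by simp
next
  case False
  with assms have "u = p" "q = p" "v = p"
    by linarith+
  then show ?thesis
    by simp
qed

lemma log_concave_mult_le_mult_outer:
  fixes f :: "real \<Rightarrow> real"
  assumes concave: "concave_on {x\<^sub>0..} (\<lambda>x. - ln (f x))" and pos: "\<And>y. x\<^sub>0 \<le> y \<Longrightarrow> 0 < f y"
    and "x\<^sub>0 \<le> p" "p \<le> u" "u \<le> q" "u + v = p + q"
  shows "f u * f v \<le> f p * f q"
proof -
  have "- ln (f p) + - ln (f q) \<le> - ln (f u) + - ln (f v)"
    by (rule concave_on_add_le_add_inner[OF concave]) (use assms in auto)
  moreover have "0 < f p" "0 < f q" "0 < f u" "0 < f v"
    using assms by (auto intro!: pos)
  ultimately have "ln (f u * f v) \<le> ln (f p * f q)"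
    by (simp add: ln_mult)
  with \<open>0 < f p\<close> \<open>0 < f q\<close> \<open>0 < f u\<close> \<open>0 < f v\<close> show ?thesis
    by simp
qed

lemma log_concave_antimono_on:
  fixes f :: "real \<Rightarrow> real"
  assumes concave: "concave_on {a..} (\<lambda>x. - ln (f x))" and pos: "\<And>y. a \<le> y \<Longrightarrow> 0 < f y"
    and lim: "(f \<longlongrightarrow> 0) at_top"
  shows "antimono_on {a..} f"
proof (rule monotone_onI)
  have "filterlim f (at_right 0) at_top"
    using lim eventually_mono[OF eventually_ge_at_top[of a] pos] by (rule tendsto_imp_filterlim_at_right)
  then have "filterlim (\<lambda>x. ln (f x)) at_bot at_top"
    by (rule filterlim_compose[OF ln_at_0])
  then have "filterlim (\<lambda>x. - ln (f x)) at_top at_top"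
    unfolding filterlim_uminus_at_top by simp
  then have mono: "mono_on {a..} (\<lambda>x. - ln (f x))"
    by (rule concave_on_mono_on_if_filterlim_at_top[OF concave])
  fix y z assume yz: "y \<in> {a..}" "z \<in> {a..}" "y \<le> z"
  from mono yz have "- ln (f y) \<le> - ln (f z)"
    by (rule mono_onD)
  with yz pos show "f z \<le> f y"
    by simp
qed

lemma asymp_equivI_relative_error:
  fixes f g :: "'a \<Rightarrow> real"
  assumes pos: "eventually (\<lambda>x. 0 < g x) F"
    and close: "\<And>\<epsilon>. 0 < \<epsilon> \<Longrightarrow> eventually (\<lambda>x. \<bar>f x - g x\<bar> \<le> \<epsilon> * g x) F"
  shows "f \<sim>[F] g"
proof (rule asymp_equivI', rule tendstoI)
  fix \<epsilon> :: real assume "0 < \<epsilon>"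
  from pos close[OF half_gt_zero[OF \<open>0 < \<epsilon>\<close>]] show "eventually (\<lambda>x. dist (f x / g x) 1 < \<epsilon>) F"
  proof eventually_elim
    case (elim x)
    then have "f x / g x - 1 = (f x - g x) / g x"
      by (simp add: field_simps)
    with elim have "\<bar>f x / g x - 1\<bar> = \<bar>f x - g x\<bar> / g x"
      by simp
    with elim have "\<bar>f x / g x - 1\<bar> \<le> \<epsilon> / 2"
      by (simp add: divide_le_eq)
    with \<open>0 < \<epsilon>\<close> show ?case by (simp add: dist_real_def)
  qed
qed

lemma filterlim_min_at_top:
  fixes f g :: "'a \<Rightarrow> 'b :: linorder"
  assumes "filterlim f at_top F" "filterlim g at_top F"
  shows "filterlim (\<lambda>x. min (f x) (g x)) at_top F"
  unfolding filterlim_at_top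
proof
  fix Z
  from assms have "eventually (\<lambda>x. Z \<le> f x) F" "eventually (\<lambda>x. Z \<le> g x) F"
    by (simp_all add: filterlim_at_top)
  then show "eventually (\<lambda>x. Z \<le> min (f x) (g x)) F"
    by eventually_elim simp
qed

definition window_pairs :: "real \<Rightarrow> real \<Rightarrow> (real \<times> real) set" where
  "window_pairs T x = {p. x < fst p + snd p \<and> fst p + snd p \<le> x + T}"

lemma window_pairs_borel: "window_pairs T x \<in> sets borel"
proof -
  have "(\<lambda>p::real \<times> real. fst p + snd p) \<in> borel_measurable borel"
    by (intro borel_measurable_continuous_onI continuous_intros)
  then have "(\<lambda>p::real \<times> real. fst p + snd p) -` {x<..x + T} \<in> sets borel"
    by (rule measurable_sets_borel) simp
  then show ?thesis
    by (simp add: window_pairs_def vimage_def)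
qed

lemma window_pairs_above_subset_rectangles:
  fixes T x H :: real
  assumes "0 < T"
  shows "window_pairs T x \<inter> {p. H < fst p \<and> H < snd p}
    \<subseteq> (\<Union>k<nat \<lceil>(x + T - 2 * H) / T\<rceil>.
          {H + real k * T<..H + real k * T + T} \<times> {x - H - (real k + 1) * T<..x - H - (real k + 1) * T + 2 * T})"
proof safe
  fix a b assume ab: "(a, b) \<in> window_pairs T x" "H < fst (a, b)" "H < snd (a, b)"
  define k where "k = nat (\<lceil>(a - H) / T\<rceil> - 1)"
  have "0 < (a - H) / T"
    using ab assms by simp
  then have k: "real k < (a - H) / T" "(a - H) / T \<le> real k + 1"
    unfolding k_def by linarith+
  then have a: "H + real k * T < a" "a \<le> H + real k * T + T"
    using assms by (simp_all add: field_simps)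
  have "(a - H) / T < (x + T - 2 * H) / T"
    using ab assms by (intro divide_strict_right_mono) (auto simp: window_pairs_def)
  with k have "k < nat \<lceil>(x + T - 2 * H) / T\<rceil>"
    by linarith
  moreover have "b \<in> {x - H - (real k + 1) * T<..x - H - (real k + 1) * T + 2 * T}"
    using a ab by (auto simp: window_pairs_def algebra_simps)
  ultimately show "(a, b) \<in> (\<Union>k<nat \<lceil>(x + T - 2 * H) / T\<rceil>.
      {H + real k * T<..H + real k * T + T} \<times> {x - H - (real k + 1) * T<..x - H - (real k + 1) * T + 2 * T})"
    using a by auto
qed

lemma (in real_distribution) measure_greaterThan_eq: "measure M {y<..} = 1 - cdf M y"
proof -
  have "{y<..} = space M - {..y}"
    by auto
  then show ?thesis
    using prob_compl[of "{..y}"] by (simp add: cdf_def2)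
qed

lemma (in real_distribution) tendsto_measure_greaterThan_at_top:
  "((\<lambda>y. measure M {y<..}) \<longlongrightarrow> 0) at_top"
  using tendsto_diff[OF tendsto_const[of 1] cdf_lim_at_top_prob]
  by (simp add: measure_greaterThan_eq)

lemma (in real_distribution) measure_atLeastAtMost_eq_cdf:
  assumes "measure M {..<0} = 0" "0 \<le> y"
  shows "measure M {0..y} = cdf M y"
proof -
  have "{..y} = {..<0} \<union> {0..y}"
    using assms by auto
  then have "cdf M y = measure M {..<0} + measure M {0..y}"
    using finite_measure_Union[of "{..<0}" "{0..y}"] by (simp add: cdf_def2 ivl_disj_int)
  with assms show ?thesis
    by simp
qed

context real_distribution
begin

interpretation pair: pair_prob_space M M
  by unfold_locales

lemma int_prob_nonneg [simp]: "0 \<le> int_prob M T x"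
  by (simp add: int_prob_def)

lemma int_prob_le_tail: "int_prob M T x \<le> measure M {x<..}"
  unfolding int_prob_def by (intro finite_measure_mono) auto

lemma tendsto_int_prob_at_top: "(int_prob M T \<longlongrightarrow> 0) at_top"
  by (rule tendsto_sandwich[OF _ _ tendsto_const tendsto_measure_greaterThan_at_top])
     (auto intro!: always_eventually int_prob_le_tail)

lemma measure_greaterThan_pos:
  assumes "eventually (\<lambda>y. 0 < int_prob M T y) at_top"
  shows "0 < measure M {x<..}"
proof -
  obtain y where "x \<le> y" "0 < int_prob M T y"
    using eventually_conj[OF eventually_ge_at_top[of x] assms] by (auto simp: eventually_at_top_linorder)
  note \<open>0 < int_prob M T y\<close>
  also have "int_prob M T y \<le> measure M {y<..}"
    by (rule int_prob_le_tail)
  also have "\<dots> \<le> measure M {x<..}"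
    using \<open>x \<le> y\<close> by (intro finite_measure_mono) auto
  finally show ?thesis .
qed

lemma sets_pair_measure_eq_borel: "sets (M \<Otimes>\<^sub>M M) = sets borel"
proof -
  have "sets (M \<Otimes>\<^sub>M M) = sets (borel \<Otimes>\<^sub>M borel)"
    by (rule sets_pair_measure_cong[OF events_eq_borel events_eq_borel])
  then show ?thesis
    by (simp only: borel_prod)
qed

lemma int_prob_convolution: "int_prob (M \<star> M) T x = measure (M \<Otimes>\<^sub>M M) (window_pairs T x)"
proof -
  have "(\<lambda>(a, b). a + b) \<in> borel_measurable (M \<Otimes>\<^sub>M M)"
    unfolding measurable_cong_sets[OF sets_pair_measure_eq_borel refl] case_prod_beta
    by (intro borel_measurable_continuous_onI continuous_intros)
  moreover have "(\<lambda>(a, b). a + b) -` {x<..x + T} \<inter> space (M \<Otimes>\<^sub>M M) = window_pairs T x"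
    by (auto simp: window_pairs_def space_pair_measure)
  ultimately show ?thesis
    unfolding int_prob_def convolution_def by (subst measure_distr) auto
qed

lemma window_pairs_pair_sets: "window_pairs T x \<in> sets (M \<Otimes>\<^sub>M M)"
  unfolding sets_pair_measure_eq_borel by (rule window_pairs_borel)

lemma window_pairs_Int_pair_sets:
  "A \<in> sets borel \<Longrightarrow> window_pairs T x \<inter> A \<in> sets (M \<Otimes>\<^sub>M M)"
  unfolding sets_pair_measure_eq_borel by (rule sets.Int[OF window_pairs_borel])

lemma emeasure_window_pairs_fst_le:
  "emeasure (M \<Otimes>\<^sub>M M) (window_pairs T x \<inter> {p. fst p \<le> H})
     = (\<integral>\<^sup>+a. indicator {..H} a * ennreal (int_prob M T (x - a)) \<partial>M)"
proof -
  have slice: "Pair a -` window_pairs T x = {x - a<..x - a + T}" for a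
    by (auto simp: window_pairs_def)
  have "{p::real \<times> real. fst p \<le> H} \<in> sets borel"
    by (intro borel_closed closed_Collect_le continuous_intros)
  then have "emeasure (M \<Otimes>\<^sub>M M) (window_pairs T x \<inter> {p. fst p \<le> H})
      = (\<integral>\<^sup>+a. emeasure M (Pair a -` (window_pairs T x \<inter> {p. fst p \<le> H})) \<partial>M)"
    by (intro emeasure_pair_measure_alt window_pairs_Int_pair_sets)
  also have "\<dots> = (\<integral>\<^sup>+a. indicator {..H} a * ennreal (int_prob M T (x - a)) \<partial>M)"
    by (intro nn_integral_cong) (simp add: slice emeasure_eq_measure int_prob_def indicator_def)
  finally show ?thesis .
qed

lemma emeasure_window_pairs_snd_le:
  "emeasure (M \<Otimes>\<^sub>M M) (window_pairs T x \<inter> {p. snd p \<le> H})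
     = (\<integral>\<^sup>+a. indicator {..H} a * ennreal (int_prob M T (x - a)) \<partial>M)"
proof -
  have slice: "(\<lambda>b. (b, a)) -` window_pairs T x = {x - a<..x - a + T}" for a
    by (auto simp: window_pairs_def)
  have "{p::real \<times> real. snd p \<le> H} \<in> sets borel"
    by (intro borel_closed closed_Collect_le continuous_intros)
  then have "emeasure (M \<Otimes>\<^sub>M M) (window_pairs T x \<inter> {p. snd p \<le> H})
      = (\<integral>\<^sup>+a. emeasure M ((\<lambda>b. (b, a)) -` (window_pairs T x \<inter> {p. snd p \<le> H})) \<partial>M)"
    by (intro pair.emeasure_pair_measure_alt2 window_pairs_Int_pair_sets)
  also have "\<dots> = (\<integral>\<^sup>+a. indicator {..H} a * ennreal (int_prob M T (x - a)) \<partial>M)"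
    by (intro nn_integral_cong) (simp add: slice emeasure_eq_measure int_prob_def indicator_def)
  finally show ?thesis .
qed

lemma measure_window_pairs_snd_le_eq_fst_le:
  "measure (M \<Otimes>\<^sub>M M) (window_pairs T x \<inter> {p. snd p \<le> H})
     = measure (M \<Otimes>\<^sub>M M) (window_pairs T x \<inter> {p. fst p \<le> H})"
  unfolding measure_def emeasure_window_pairs_fst_le emeasure_window_pairs_snd_le ..

lemma measure_window_pairs_fst_le_bounds:
  assumes nonneg: "AE a in M. 0 \<le> a" and "0 \<le> lo"
    and bounds: "\<And>a. 0 \<le> a \<Longrightarrow> a \<le> H \<Longrightarrow> lo \<le> int_prob M T (x - a) \<and> int_prob M T (x - a) \<le> up"
  shows "lo * measure M {0..H} \<le> measure (M \<Otimes>\<^sub>M M) (window_pairs T x \<inter> {p. fst p \<le> H})"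
    and "measure (M \<Otimes>\<^sub>M M) (window_pairs T x \<inter> {p. fst p \<le> H}) \<le> max 0 up"
proof -
  let ?I = "\<integral>\<^sup>+a. indicator {..H} a * ennreal (int_prob M T (x - a)) \<partial>M"
  have "ennreal (lo * measure M {0..H}) = (\<integral>\<^sup>+a. ennreal lo * indicator {0..H} a \<partial>M)"
    using \<open>0 \<le> lo\<close> by (simp add: nn_integral_cmult_indicator emeasure_eq_measure ennreal_mult)
  also have "\<dots> \<le> ?I"
    by (intro nn_integral_mono) (auto simp: indicator_def bounds ennreal_leI)
  finally have lower: "ennreal (lo * measure M {0..H}) \<le> ?I" .
  have "?I \<le> (\<integral>\<^sup>+a. ennreal (max 0 up) \<partial>M)"
    by (intro nn_integral_mono_AE, use nonneg in eventually_elim)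
       (auto simp: indicator_def bounds ennreal_leI)
  also have "\<dots> = ennreal (max 0 up)"
    using emeasure_space_1 by simp
  finally have upper: "?I \<le> ennreal (max 0 up)" .
  have measure_eq: "measure (M \<Otimes>\<^sub>M M) (window_pairs T x \<inter> {p. fst p \<le> H}) = enn2real ?I"
    unfolding measure_def emeasure_window_pairs_fst_le ..
  show "lo * measure M {0..H} \<le> measure (M \<Otimes>\<^sub>M M) (window_pairs T x \<inter> {p. fst p \<le> H})"
    unfolding measure_eq
    using enn2real_mono[OF lower le_less_trans[OF upper ennreal_less_top]] \<open>0 \<le> lo\<close>
    by simp
  show "measure (M \<Otimes>\<^sub>M M) (window_pairs T x \<inter> {p. fst p \<le> H}) \<le> max 0 up"
    unfolding measure_eq using upper by (simp add: enn2real_leI)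
qed

lemma measure_window_pairs_split:
  fixes T x H :: real
  assumes "2 * H \<le> x"
  defines "W \<equiv> window_pairs T x"
  shows "measure (M \<Otimes>\<^sub>M M) (W \<inter> {p. fst p \<le> H}) + measure (M \<Otimes>\<^sub>M M) (W \<inter> {p. snd p \<le> H})
           \<le> measure (M \<Otimes>\<^sub>M M) W"
    and "measure (M \<Otimes>\<^sub>M M) W
           \<le> measure (M \<Otimes>\<^sub>M M) (W \<inter> {p. fst p \<le> H}) + measure (M \<Otimes>\<^sub>M M) (W \<inter> {p. snd p \<le> H})
             + measure (M \<Otimes>\<^sub>M M) (W \<inter> {p. H < fst p \<and> H < snd p})"
proof -
  have sets: "W \<inter> {p. fst p \<le> H} \<in> sets (M \<Otimes>\<^sub>M M)" "W \<inter> {p. snd p \<le> H} \<in> sets (M \<Otimes>\<^sub>M M)"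
    "W \<inter> {p. H < fst p \<and> H < snd p} \<in> sets (M \<Otimes>\<^sub>M M)" "W \<in> sets (M \<Otimes>\<^sub>M M)"
    unfolding W_def
    by (intro window_pairs_pair_sets window_pairs_Int_pair_sets borel_closed borel_open
        closed_Collect_le open_Collect_conj open_Collect_less continuous_intros)+
  have "(W \<inter> {p. fst p \<le> H}) \<inter> (W \<inter> {p. snd p \<le> H}) = {}"
    using assms by (auto simp: window_pairs_def)
  then have "measure (M \<Otimes>\<^sub>M M) (W \<inter> {p. fst p \<le> H}) + measure (M \<Otimes>\<^sub>M M) (W \<inter> {p. snd p \<le> H})
      = measure (M \<Otimes>\<^sub>M M) (W \<inter> {p. fst p \<le> H} \<union> W \<inter> {p. snd p \<le> H})"
    using sets by (simp add: pair.finite_measure_Union)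
  also have "\<dots> \<le> measure (M \<Otimes>\<^sub>M M) W"
    using sets by (intro pair.finite_measure_mono) auto
  finally show "measure (M \<Otimes>\<^sub>M M) (W \<inter> {p. fst p \<le> H}) + measure (M \<Otimes>\<^sub>M M) (W \<inter> {p. snd p \<le> H})
      \<le> measure (M \<Otimes>\<^sub>M M) W" .
  have "W = (W \<inter> {p. fst p \<le> H} \<union> W \<inter> {p. snd p \<le> H}) \<union> W \<inter> {p. H < fst p \<and> H < snd p}"
    by auto
  then show "measure (M \<Otimes>\<^sub>M M) W
      \<le> measure (M \<Otimes>\<^sub>M M) (W \<inter> {p. fst p \<le> H}) + measure (M \<Otimes>\<^sub>M M) (W \<inter> {p. snd p \<le> H})
        + measure (M \<Otimes>\<^sub>M M) (W \<inter> {p. H < fst p \<and> H < snd p})"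
    using sets measure_Un_le[of "W \<inter> {p. fst p \<le> H}" "M \<Otimes>\<^sub>M M" "W \<inter> {p. snd p \<le> H}"]
      measure_Un_le[of "W \<inter> {p. fst p \<le> H} \<union> W \<inter> {p. snd p \<le> H}" "M \<Otimes>\<^sub>M M"
        "W \<inter> {p. H < fst p \<and> H < snd p}"]
    by (simp add: pair.emeasure_eq_measure)
qed

lemma measure_pair_measure_Times:
  assumes "A \<in> sets M" "B \<in> sets M"
  shows "measure (M \<Otimes>\<^sub>M M) (A \<times> B) = measure M A * measure M B"
  using emeasure_pair_measure_Times[OF assms]
  by (simp add: emeasure_eq_measure pair.emeasure_eq_measure ennreal_mult[symmetric])

end

locale window_distribution = real_distribution M for M :: "real measure" +
  fixes T :: real
  assumes T_pos: "0 < T"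
begin

lemma measure_interval_eq_sum_int_prob:
  "measure M {a<..a + real n * T} = (\<Sum>j<n. int_prob M T (a + real j * T))"
proof (induction n)
  case (Suc n)
  have "{a<..a + real (Suc n) * T} = {a<..a + real n * T} \<union> {a + real n * T<..a + real n * T + T}"
    using T_pos by (subst ivl_disj_un_two(6)) (auto simp: algebra_simps)
  then have "measure M {a<..a + real (Suc n) * T}
      = measure M {a<..a + real n * T} + int_prob M T (a + real n * T)"
    by (simp add: int_prob_def finite_measure_Union)
  with Suc show ?case
    by simp
qed simp

lemma tendsto_mult_int_prob_at_top:
  assumes antimono: "antimono_on {x\<^sub>1..} (int_prob M T)"
  shows "((\<lambda>y. y * int_prob M T y) \<longlongrightarrow> 0) at_top"
proof (rule tendsto_sandwich[OF _ _ tendsto_const])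
  let ?f = "int_prob M T"
  have bound: "y * ?f y \<le> 2 * T * (measure M {y / 2<..} + ?f y)" if y: "2 * max x\<^sub>1 0 \<le> y" for y
  proof -
    \<comment> \<open>About \<open>y / (2T)\<close> disjoint windows in \<open>(y/2, y]\<close> each carry at least \<open>f y\<close>.\<close>
    define n where "n = nat \<lfloor>y / (2 * T)\<rfloor>"
    have n: "real n \<le> y / (2 * T)" "y / (2 * T) \<le> real n + 1"
      using y T_pos by (simp_all add: n_def)
    have "real n * ?f y = (\<Sum>j<n. ?f y)"
      by simp
    also have "\<dots> \<le> (\<Sum>j<n. ?f (y / 2 + real j * T))"
    proof (intro sum_mono monotone_onD[OF antimono])
      fix j assume "j \<in> {..<n}"
      then have "real j * T \<le> y / (2 * T) * T"
        using n T_pos by (intro mult_right_mono) auto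
      with T_pos show "y / 2 + real j * T \<le> y"
        by simp
      have "0 \<le> real j * T"
        using T_pos by simp
      then show "y / 2 + real j * T \<in> {x\<^sub>1..}" "y \<in> {x\<^sub>1..}"
        using y by auto
    qed
    also have "\<dots> = measure M {y / 2<..y / 2 + real n * T}"
      by (rule measure_interval_eq_sum_int_prob[symmetric])
    also have "\<dots> \<le> measure M {y / 2<..}"
      by (intro finite_measure_mono) auto
    finally have sum_bound: "real n * ?f y \<le> measure M {y / 2<..}" .
    have "y \<le> 2 * T * (real n + 1)"
      using n T_pos by (simp add: divide_le_eq mult.commute)
    then have "y * ?f y \<le> 2 * T * (real n + 1) * ?f y"
      by (intro mult_right_mono) auto
    also have "\<dots> = 2 * T * (real n * ?f y + ?f y)"
      by (simp add: algebra_simps)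
    also have "\<dots> \<le> 2 * T * (measure M {y / 2<..} + ?f y)"
      using sum_bound T_pos by simp
    finally show ?thesis .
  qed
  have "filterlim (\<lambda>y::real. y / 2) at_top at_top"
    by real_asymp
  then have "((\<lambda>y. 2 * T * (measure M {y / 2<..} + ?f y)) \<longlongrightarrow> 2 * T * (0 + 0)) at_top"
    by (intro tendsto_intros tendsto_int_prob_at_top
        filterlim_compose[OF tendsto_measure_greaterThan_at_top])
  then show "((\<lambda>y. 2 * T * (measure M {y / 2<..} + ?f y)) \<longlongrightarrow> 0) at_top"
    by simp
  show "eventually (\<lambda>y. y * ?f y \<le> 2 * T * (measure M {y / 2<..} + ?f y)) at_top"
    using eventually_ge_at_top[of "2 * max x\<^sub>1 0"] by eventually_elim (rule bound)
  show "eventually (\<lambda>y. 0 \<le> y * ?f y) at_top"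
    using eventually_ge_at_top[of 0] by eventually_elim simp
qed

interpretation pair: pair_prob_space M M
  by unfold_locales

lemma measure_window_pairs_above_le:
  assumes log_concave: "\<And>p u q v. p\<^sub>0 \<le> p \<Longrightarrow> p \<le> u \<Longrightarrow> u \<le> q \<Longrightarrow> u + v = p + q \<Longrightarrow>
      int_prob M T u * int_prob M T v \<le> int_prob M T p * int_prob M T q"
    and H: "p\<^sub>0 + 2 * T \<le> H" "0 \<le> H" "2 * H \<le> x"
  shows "measure (M \<Otimes>\<^sub>M M) (window_pairs T x \<inter> {p. H < fst p \<and> H < snd p})
    \<le> (x / T + 2) * (int_prob M T (H - 2 * T) * (int_prob M T (x + T - H) + int_prob M T (x + 2 * T - H)))"
proof -
  let ?f = "int_prob M T"
  define K where "K = nat \<lceil>(x + T - 2 * H) / T\<rceil>"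
  define u where "u k = H + real k * T" for k :: nat
  define v where "v k = x - H - (real k + 1) * T" for k :: nat
  define C where "C = ?f (H - 2 * T) * (?f (x + T - H) + ?f (x + 2 * T - H))"
  \<comment> \<open>Log-concavity moves both sides of every rectangle outwards, to the extreme one.\<close>
  have rect: "measure (M \<Otimes>\<^sub>M M) ({u k<..u k + T} \<times> {v k<..v k + 2 * T}) \<le> C" if "k < K" for k
  proof -
    have "real k < (x + T - 2 * H) / T"
      using that unfolding K_def by linarith
    then have "real k * T < x + T - 2 * H"
      using T_pos by (simp add: field_simps)
    moreover have "0 \<le> real k * T"
      using T_pos by simp
    ultimately have le: "H - 2 * T \<le> u k" "H - 2 * T \<le> v k" "u k \<le> x + T - H"
      using T_pos by (simp_all add: u_def v_def algebra_simps)
    have "measure M {v k<..v k + 2 * T} = ?f (v k) + ?f (v k + T)"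
      using measure_interval_eq_sum_int_prob[of "v k" 2] by (simp add: numeral_2_eq_2 algebra_simps)
    then have "measure (M \<Otimes>\<^sub>M M) ({u k<..u k + T} \<times> {v k<..v k + 2 * T})
        = ?f (u k) * ?f (v k) + ?f (u k) * ?f (v k + T)"
      by (simp add: measure_pair_measure_Times int_prob_def algebra_simps)
    also have "\<dots> \<le> ?f (H - 2 * T) * ?f (x + T - H) + ?f (H - 2 * T) * ?f (x + 2 * T - H)"
      using H le T_pos
      by (intro add_mono log_concave) (simp_all add: u_def v_def algebra_simps)
    finally show ?thesis
      by (simp add: C_def algebra_simps)
  qed
  have "measure (M \<Otimes>\<^sub>M M) (window_pairs T x \<inter> {p. H < fst p \<and> H < snd p})
      \<le> measure (M \<Otimes>\<^sub>M M) (\<Union>k<K. {u k<..u k + T} \<times> {v k<..v k + 2 * T})"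
    using window_pairs_above_subset_rectangles[OF T_pos, of x H]
    by (intro pair.finite_measure_mono) (auto simp: K_def u_def v_def)
  also have "\<dots> \<le> (\<Sum>k<K. measure (M \<Otimes>\<^sub>M M) ({u k<..u k + T} \<times> {v k<..v k + 2 * T}))"
    by (intro pair.finite_measure_subadditive_finite) auto
  also have "\<dots> \<le> real K * C"
    using sum_mono[of "{..<K}" _ "\<lambda>_. C"] rect by simp
  also have "\<dots> \<le> (x / T + 2) * C"
  proof (rule mult_right_mono)
    have "real K \<le> (x + T - 2 * H) / T + 1"
      using H T_pos by (simp add: K_def)
    also have "\<dots> \<le> x / T + 2"
      using H T_pos by (simp add: field_simps)
    finally show "real K \<le> x / T + 2" .
  qed (simp add: C_def)
  finally show ?thesis
    by (simp add: C_def)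
qed

lemma tendsto_mult_int_prob_min_at_top:
  assumes antimono: "antimono_on {x\<^sub>1..} (int_prob M T)"
    and pos: "eventually (\<lambda>x. 0 < int_prob M T x) at_top"
    and h: "filterlim h at_top at_top"
    and uniform: "eventually (\<lambda>x. \<forall>t. \<bar>t\<bar> \<le> h x \<longrightarrow>
        \<bar>int_prob M T (x + t) / int_prob M T x - 1\<bar> < 1) at_top"
    and small: "((\<lambda>x. x * int_prob M T (h x)) \<longlongrightarrow> 0) at_top"
  shows "((\<lambda>x. x * int_prob M T (min (h x) (x / 4) - 2 * T)) \<longlongrightarrow> 0) at_top"
proof (rule tendsto_sandwich[OF _ _ tendsto_const])
  let ?f = "int_prob M T"
  have "eventually (\<lambda>y. ?f (y - 2 * T) \<le> 2 * ?f y) at_top"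
    using uniform pos h[unfolded filterlim_at_top, rule_format, of "2 * T"]
  proof eventually_elim
    case (elim y)
    then have "\<bar>?f (y + - (2 * T)) / ?f y - 1\<bar> < 1"
      using T_pos by (intro elim(1)[rule_format]) simp
    then have "?f (y - 2 * T) / ?f y < 2"
      by simp
    with elim show ?case
      by (simp add: divide_less_eq)
  qed
  then have doubling: "eventually (\<lambda>x. ?f (h x - 2 * T) \<le> 2 * ?f (h x)) at_top"
    using h by (rule eventually_compose_filterlim)
  have "filterlim (\<lambda>x::real. x / 4 - 2 * T) at_top at_top"
    by real_asymp
  then have "((\<lambda>x. 4 * ((x / 4 - 2 * T) * ?f (x / 4 - 2 * T)) + 8 * T * ?f (x / 4 - 2 * T))
      \<longlongrightarrow> 4 * 0 + 8 * T * 0) at_top"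
    by (intro tendsto_intros filterlim_compose[OF tendsto_mult_int_prob_at_top[OF antimono]]
        filterlim_compose[OF tendsto_int_prob_at_top])
  then have "((\<lambda>x. x * ?f (x / 4 - 2 * T)) \<longlongrightarrow> 0) at_top"
    by (simp add: algebra_simps)
  from tendsto_add[OF tendsto_mult_right_zero[OF small, of 2] this]
  show "((\<lambda>x. 2 * (x * ?f (h x)) + x * ?f (x / 4 - 2 * T)) \<longlongrightarrow> 0) at_top"
    by (simp add: mult.commute)
  show "eventually (\<lambda>x. x * ?f (min (h x) (x / 4) - 2 * T) \<le> 2 * (x * ?f (h x)) + x * ?f (x / 4 - 2 * T)) at_top"
    using eventually_ge_at_top[of 0] doubling
  proof eventually_elim
    case (elim x)
    have "?f (min (h x) (x / 4) - 2 * T) \<le> ?f (h x - 2 * T) + ?f (x / 4 - 2 * T)"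
      by (simp add: min_def add_increasing add_increasing2)
    also have "\<dots> \<le> 2 * ?f (h x) + ?f (x / 4 - 2 * T)"
      using elim by simp
    finally show ?case
      using elim mult_left_mono by (fastforce simp: algebra_simps)
  qed
  show "eventually (\<lambda>x. 0 \<le> x * ?f (min (h x) (x / 4) - 2 * T)) at_top"
    using eventually_ge_at_top[of 0] by eventually_elim simp
qed

lemma tendsto_window_remainder_at_top:
  assumes antimono: "antimono_on {x\<^sub>1..} (int_prob M T)"
    and pos: "eventually (\<lambda>x. 0 < int_prob M T x) at_top"
    and h: "filterlim h at_top at_top"
    and uniform: "eventually (\<lambda>x. \<forall>t. \<bar>t\<bar> \<le> h x \<longrightarrow>
        \<bar>int_prob M T (x + t) / int_prob M T x - 1\<bar> < 1) at_top"
    and small: "((\<lambda>x. x * int_prob M T (h x)) \<longlongrightarrow> 0) at_top"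
  shows "((\<lambda>x. (x / T + 2) * int_prob M T (min (h x) (x / 4) - 2 * T)) \<longlongrightarrow> 0) at_top"
proof (rule tendsto_sandwich[OF _ _ tendsto_const])
  let ?r = "\<lambda>x. int_prob M T (min (h x) (x / 4) - 2 * T)"
  show "((\<lambda>x. (1 / T + 2) * (x * ?r x)) \<longlongrightarrow> 0) at_top"
    using tendsto_mult_right_zero[OF tendsto_mult_int_prob_min_at_top[OF assms], of "1 / T + 2"] .
  show "eventually (\<lambda>x. (x / T + 2) * ?r x \<le> (1 / T + 2) * (x * ?r x)) at_top"
    using eventually_ge_at_top[of 1]
  proof eventually_elim
    case (elim x)
    then have "x / T + 2 \<le> (1 / T + 2) * x"
      using T_pos by (simp add: algebra_simps)
    then show ?case
      by (metis int_prob_nonneg mult.assoc mult_right_mono)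
  qed
  show "eventually (\<lambda>x. 0 \<le> (x / T + 2) * ?r x) at_top"
    using eventually_ge_at_top[of 0] by eventually_elim (simp add: T_pos less_imp_le)
qed

lemma int_prob_convolution_bounds:
  assumes nonneg: "measure M {..<0} = 0"
    and log_concave: "\<And>p u q v. p\<^sub>0 \<le> p \<Longrightarrow> p \<le> u \<Longrightarrow> u \<le> q \<Longrightarrow> u + v = p + q \<Longrightarrow>
      int_prob M T u * int_prob M T v \<le> int_prob M T p * int_prob M T q"
    and H: "p\<^sub>0 + 2 * T \<le> H" "2 * T \<le> H" "2 * H \<le> x"
    and d: "0 \<le> d" "d \<le> 1"
    and near: "\<And>t. \<bar>t\<bar> \<le> H \<Longrightarrow>
      (1 - d) * int_prob M T x \<le> int_prob M T (x + t) \<and> int_prob M T (x + t) \<le> (1 + d) * int_prob M T x"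
  shows "2 * (1 - d) * int_prob M T x * measure M {0..H} \<le> int_prob (M \<star> M) T x"
    and "int_prob (M \<star> M) T x \<le> 2 * (1 + d) * int_prob M T x * (1 + (x / T + 2) * int_prob M T (H - 2 * T))"
proof -
  let ?f = "int_prob M T" and ?P = "measure (M \<Otimes>\<^sub>M M)"
  have "AE a in M. 0 \<le> a"
    using nonneg by (intro AE_I'[of "{..<0}"]) (auto simp: null_sets_def emeasure_eq_measure)
  moreover have "(1 - d) * ?f x \<le> ?f (x - a) \<and> ?f (x - a) \<le> (1 + d) * ?f x" if "0 \<le> a" "a \<le> H" for a
    using near[of "- a"] that by simp
  moreover have "0 \<le> (1 - d) * ?f x" "0 \<le> (1 + d) * ?f x"
    using d by simp_all
  ultimately have near_strips:
    "(1 - d) * ?f x * measure M {0..H} \<le> ?P (window_pairs T x \<inter> {p. fst p \<le> H})"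
    "?P (window_pairs T x \<inter> {p. fst p \<le> H}) \<le> (1 + d) * ?f x"
    using measure_window_pairs_fst_le_bounds[where lo = "(1 - d) * ?f x" and up = "(1 + d) * ?f x"
        and T = T and x = x and H = H]
    by auto
  have "?f (x + T - H) \<le> (1 + d) * ?f x" "?f (x + 2 * T - H) \<le> (1 + d) * ?f x"
    using near[of "T - H"] near[of "2 * T - H"] H T_pos by (simp_all add: abs_le_iff algebra_simps)
  then have "?f (x + T - H) + ?f (x + 2 * T - H) \<le> 2 * (1 + d) * ?f x"
    by (simp add: algebra_simps)
  moreover have "0 \<le> x / T + 2"
    using H T_pos by simp
  ultimately have "(x / T + 2) * (?f (H - 2 * T) * (?f (x + T - H) + ?f (x + 2 * T - H)))
      \<le> (x / T + 2) * (?f (H - 2 * T) * (2 * (1 + d) * ?f x))"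
    by (intro mult_left_mono) simp_all
  moreover have "?P (window_pairs T x \<inter> {p. H < fst p \<and> H < snd p})
      \<le> (x / T + 2) * (?f (H - 2 * T) * (?f (x + T - H) + ?f (x + 2 * T - H)))"
    by (rule measure_window_pairs_above_le) (use log_concave H T_pos in auto)
  ultimately have "?P (window_pairs T x \<inter> {p. H < fst p \<and> H < snd p})
      \<le> (x / T + 2) * (?f (H - 2 * T) * (2 * (1 + d) * ?f x))"
    by linarith
  then show "int_prob (M \<star> M) T x \<le> 2 * (1 + d) * ?f x * (1 + (x / T + 2) * ?f (H - 2 * T))"
    using measure_window_pairs_split(2)[OF H(3), of T] near_strips
    by (simp add: int_prob_convolution measure_window_pairs_snd_le_eq_fst_le algebra_simps)
  have "2 * ((1 - d) * ?f x * measure M {0..H}) \<le> int_prob (M \<star> M) T x"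
    using measure_window_pairs_split(1)[OF H(3), of T] near_strips
    by (simp add: int_prob_convolution measure_window_pairs_snd_le_eq_fst_le)
  then show "2 * (1 - d) * ?f x * measure M {0..H} \<le> int_prob (M \<star> M) T x"
    by (simp only: mult.assoc)
qed

lemma int_prob_convolution_relative_error:
  assumes nonneg: "measure M {..<0} = 0"
    and log_concave: "\<And>p u q v. p\<^sub>0 \<le> p \<Longrightarrow> p \<le> u \<Longrightarrow> u \<le> q \<Longrightarrow> u + v = p + q \<Longrightarrow>
      int_prob M T u * int_prob M T v \<le> int_prob M T p * int_prob M T q"
    and H: "p\<^sub>0 + 2 * T \<le> H" "2 * T \<le> H" "2 * H \<le> x"
    and d: "0 \<le> d" "d \<le> 1"
    and near: "\<And>t. \<bar>t\<bar> \<le> H \<Longrightarrow>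
      (1 - d) * int_prob M T x \<le> int_prob M T (x + t) \<and> int_prob M T (x + t) \<le> (1 + d) * int_prob M T x"
    and mass: "1 - d \<le> measure M {0..H}"
    and remainder: "(x / T + 2) * int_prob M T (H - 2 * T) \<le> d"
  shows "\<bar>int_prob (M \<star> M) T x - 2 * int_prob M T x\<bar> \<le> 3 * d * (2 * int_prob M T x)"
proof -
  let ?F = "int_prob M T x" and ?S = "int_prob (M \<star> M) T x"
  note bounds = int_prob_convolution_bounds[OF nonneg log_concave H d near]
  have "0 \<le> 2 * (1 - d) * ?F" "0 \<le> 2 * (1 + d) * ?F"
    using d by simp_all
  have "2 * (1 - d) * ?F * (1 - d) \<le> 2 * (1 - d) * ?F * measure M {0..H}"
    using mass \<open>0 \<le> 2 * (1 - d) * ?F\<close> by (rule mult_left_mono)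
  with bounds(1) have lower: "2 * (1 - d) * ?F * (1 - d) \<le> ?S"
    by linarith
  have "1 + (x / T + 2) * int_prob M T (H - 2 * T) \<le> 1 + d"
    using remainder by simp
  then have "2 * (1 + d) * ?F * (1 + (x / T + 2) * int_prob M T (H - 2 * T)) \<le> 2 * (1 + d) * ?F * (1 + d)"
    using \<open>0 \<le> 2 * (1 + d) * ?F\<close> by (rule mult_left_mono)
  with bounds(2) have upper: "?S \<le> 2 * (1 + d) * ?F * (1 + d)"
    by linarith
  have "2 * (1 - d) * ?F * (1 - d) = 2 * ?F - 4 * (d * ?F) + 2 * (d * (d * ?F))"
    "2 * (1 + d) * ?F * (1 + d) = 2 * ?F + 4 * (d * ?F) + 2 * (d * (d * ?F))"
    "3 * d * (2 * ?F) = 6 * (d * ?F)"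
    by (simp_all add: algebra_simps)
  moreover have "0 \<le> d * (d * ?F)" "d * (d * ?F) \<le> d * ?F"
    using d by (simp_all add: mult_left_le_one_le)
  ultimately show ?thesis
    using lower upper unfolding abs_le_iff by linarith
qed

lemma int_prob_convolution_asymp_equiv:
  assumes nonneg: "measure M {..<0} = 0"
    and log_concave: "\<And>p u q v. p\<^sub>0 \<le> p \<Longrightarrow> p \<le> u \<Longrightarrow> u \<le> q \<Longrightarrow> u + v = p + q \<Longrightarrow>
      int_prob M T u * int_prob M T v \<le> int_prob M T p * int_prob M T q"
    and antimono: "antimono_on {x\<^sub>1..} (int_prob M T)"
    and pos: "eventually (\<lambda>x. 0 < int_prob M T x) at_top"
    and h: "filterlim h at_top at_top"
    and uniform: "\<forall>\<epsilon>>0. eventually (\<lambda>x. \<forall>t. \<bar>t\<bar> \<le> h x \<longrightarrow>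
        \<bar>int_prob M T (x + t) / int_prob M T x - 1\<bar> < \<epsilon>) at_top"
    and small: "((\<lambda>x. x * int_prob M T (h x)) \<longlongrightarrow> 0) at_top"
  shows "(\<lambda>x. int_prob (M \<star> M) T x) \<sim>[at_top] (\<lambda>x. 2 * int_prob M T x)"
proof (rule asymp_equivI_relative_error)
  let ?f = "int_prob M T" and ?H = "\<lambda>x. min (h x) (x / 4)"
  show "eventually (\<lambda>x. 0 < 2 * ?f x) at_top"
    using pos by eventually_elim simp
  fix \<epsilon> :: real assume "0 < \<epsilon>"
  define d where "d = min (\<epsilon> / 3) 1"
  have d: "0 < d" "d \<le> 1" "3 * d \<le> \<epsilon>"
    using \<open>0 < \<epsilon>\<close> by (auto simp: d_def)
  have "filterlim (\<lambda>x::real. x / 4) at_top at_top"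
    by real_asymp
  with h have H: "filterlim ?H at_top at_top"
    by (rule filterlim_min_at_top)
  have "((\<lambda>x. (x / T + 2) * ?f (?H x - 2 * T)) \<longlongrightarrow> 0) at_top"
    using uniform d(1) by (intro tendsto_window_remainder_at_top[OF antimono pos h _ small]) simp
  then have remainder: "eventually (\<lambda>x. (x / T + 2) * ?f (?H x - 2 * T) < d) at_top"
    using d(1) by (rule order_tendstoD)
  have "eventually (\<lambda>x. 1 - d < cdf M (?H x)) at_top"
    using d(1) by (intro order_tendstoD(1)[OF filterlim_compose[OF cdf_lim_at_top_prob H]]) simp
  then have mass: "eventually (\<lambda>x. 1 - d < measure M {0..?H x}) at_top"
    using H[unfolded filterlim_at_top, rule_format, of 0]
    by eventually_elim (simp add: measure_atLeastAtMost_eq_cdf[OF nonneg])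
  show "eventually (\<lambda>x. \<bar>int_prob (M \<star> M) T x - 2 * ?f x\<bar> \<le> \<epsilon> * (2 * ?f x)) at_top"
    using uniform[rule_format, OF d(1)] pos remainder mass eventually_ge_at_top[of 0]
      H[unfolded filterlim_at_top, rule_format, of "max p\<^sub>0 0 + 2 * T"]
  proof eventually_elim
    case (elim x)
    let ?F = "?f x" and ?S = "int_prob (M \<star> M) T x"
    have near: "(1 - d) * ?F \<le> ?f (x + t) \<and> ?f (x + t) \<le> (1 + d) * ?F" if "\<bar>t\<bar> \<le> ?H x" for t
    proof -
      have "\<bar>?f (x + t) / ?F - 1\<bar> < d"
        using elim(1) that by simp
      then have "1 - d \<le> ?f (x + t) / ?F" "?f (x + t) / ?F \<le> 1 + d"
        by linarith+
      with elim(2) show ?thesis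
        by (simp add: le_divide_eq divide_le_eq)
    qed
    have Hx: "p\<^sub>0 + 2 * T \<le> ?H x" "2 * T \<le> ?H x" "2 * ?H x \<le> x"
      using elim by auto
    have "\<bar>?S - 2 * ?F\<bar> \<le> 3 * d * (2 * ?F)"
      using elim(3,4) d(1)
      by (intro int_prob_convolution_relative_error[OF nonneg log_concave Hx _ d(2) near]) simp_all
    also have "\<dots> \<le> \<epsilon> * (2 * ?F)"
      using d elim(2) by (intro mult_right_mono) simp_all
    finally show ?case .
  qed
qed

end

lemma window_distribution_if_distr_nonneg: "distr_nonneg M \<Longrightarrow> 0 < T \<Longrightarrow> window_distribution M T"
  by (simp add: distr_nonneg_def window_distribution_def window_distribution_axioms_def
      real_distribution_def real_distribution_axioms_def)

theorem proposition10:
  fixes M :: "real measure" and T x\<^sub>0 :: real and h :: "real \<Rightarrow> real"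
  assumes "0 < T"
    and "distr_nonneg M"
    and "local_long_tailed M T"
    and "concave_on {x\<^sub>0..} (\<lambda>x. - ln (int_prob M T x))"
    and "mono h" and "filterlim h at_top at_top"
    and "\<forall>\<epsilon>>0. eventually (\<lambda>x. \<forall>t. \<bar>t\<bar> \<le> h x \<longrightarrow>
            \<bar>int_prob M T (x + t) / int_prob M T x - 1\<bar> < \<epsilon>) at_top"
    and "((\<lambda>x. x * int_prob M T (h x)) \<longlongrightarrow> 0) at_top"
  shows "local_subexp M T"
proof -
  interpret window_distribution M T
    by (rule window_distribution_if_distr_nonneg[OF assms(2,1)])
  have pos: "eventually (\<lambda>x. 0 < int_prob M T x) at_top"
    using assms(3) by (simp add: local_long_tailed_def)
  then obtain x\<^sub>1 where x\<^sub>1: "\<And>y. x\<^sub>1 \<le> y \<Longrightarrow> 0 < int_prob M T y"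
    by (auto simp: eventually_at_top_linorder)
  define a where "a = max x\<^sub>0 x\<^sub>1"
  have concave: "concave_on {a..} (\<lambda>x. - ln (int_prob M T x))"
    by (rule concave_on_subset[OF assms(4)]) (auto simp: a_def)
  have pos_a: "0 < int_prob M T y" if "a \<le> y" for y
    using that x\<^sub>1 by (simp add: a_def)
  have nonneg: "measure M {..<0} = 0"
    using assms(2) by (simp add: distr_nonneg_def)
  have "(\<lambda>x. int_prob (M \<star> M) T x) \<sim>[at_top] (\<lambda>x. 2 * int_prob M T x)"
    by (rule int_prob_convolution_asymp_equiv[OF nonneg log_concave_mult_le_mult_outer[OF concave pos_a]
          log_concave_antimono_on[OF concave pos_a tendsto_int_prob_at_top] pos assms(6-8)])
  with assms(3) measure_greaterThan_pos[OF pos] show ?thesis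
    by (simp add: local_subexp_def)
qed

end
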